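(* Let $n\ge 2$ and let $e_1,\dots,e_k\in\mathbb{C}^{n\times n}$ be an anticommuting family of nilpotent matrices with $e_1^2,\dots,e_k^2\neq0$. Then $k\le 2(n-2)$.
   Context: A family $e_1,\dots,e_k$ of complex $n\times n$ matrices is called anticommuting if $e_ie_j=-e_je_i$ for all distinct $i,j\in\{1,\dots,k\}$. *)

theory Defs
  imports "Jordan_Normal_Form.Matrix"
begin

definition nilpotent_mat :: "'a::semiring_1 mat \<Rightarrow> bool" where
  "nilpotent_mat A \<longleftrightarrow> (\<exists>m. A ^\<^sub>m m = 0\<^sub>m (dim_row A) (dim_col A))"

definition anticommuting :: "nat \<Rightarrow> (nat \<Rightarrow> 'a::ring_1 mat) \<Rightarrow> bool" where
  "anticommuting k e \<longleftrightarrow> (\<forall>i\<in>{1..k}. \<forall>j\<in>{1..k}. i \<noteq> j \<longrightarrow> e i * e j = - (e j * e i))"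

end

theory Submission
  imports Defs "Jordan_Normal_Form.Determinant"
begin

text \<open>In an anticommuting family the kernel of each member is invariant under the others, so
  nilpotency yields a nonzero \<open>y\<close> with \<open>y\<^sup>T e\<^sub>i = 0\<close> for all \<open>i\<close> and then, inside \<open>y\<^sup>\<bottom>\<close>,
  a nonzero \<open>z\<close> with \<open>e\<^sub>i z = 0\<close> for all \<open>i\<close>. Choose \<open>u, w\<close> with \<open>u\<^sup>T e\<^sub>i\<^sup>2 w \<noteq> 0\<close> for all \<open>i\<close>.
  The \<open>k \<times> k\<close> matrix \<open>M\<^sub>i\<^sub>j = u\<^sup>T e\<^sub>i e\<^sub>j w\<close> factors through \<open>y\<^sup>\<bottom> / \<langle>z\<rangle>\<close>, of dimension
  \<open>n - 2\<close>, while by anticommutation \<open>M + M\<^sup>T\<close> is diagonal with nonzero entries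
  \<open>2 u\<^sup>T e\<^sub>i\<^sup>2 w\<close>. Hence \<open>k = rank (M + M\<^sup>T) \<le> 2 (n - 2)\<close>.\<close>

lemma funpow_ex_last_nonzero:
  assumes "\<forall>s\<in>S. f s \<in> S" and "s \<in> S" and "s \<noteq> z" and "(f ^^ m) s = z"
  shows "\<exists>t\<in>S. t \<noteq> z \<and> f t = z"
  using assms(2-4)
proof (induction m arbitrary: s)
  case 0
  then show ?case by simp
next
  case (Suc m)
  show ?case
  proof (cases "f s = z")
    case True
    then show ?thesis using Suc.prems by blast
  next
    case False
    have "(f ^^ m) (f s) = z"
      using Suc.prems(3) by (simp add: funpow_Suc_right del: funpow.simps)
    then show ?thesis using Suc.IH[of "f s"] Suc.prems(1) assms(1) False by blast
  qed
qed

lemma locally_nilpotent_family_common_zero: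
  assumes "finite I"
    and "\<forall>i\<in>I. \<forall>s\<in>S. f i s \<in> S"
    and "\<forall>i\<in>I. \<forall>j\<in>I. i \<noteq> j \<longrightarrow> (\<forall>s\<in>S. f j s = z \<longrightarrow> f j (f i s) = z)"
    and "\<forall>i\<in>I. \<forall>s\<in>S. \<exists>m. (f i ^^ m) s = z"
    and "x \<in> S" and "x \<noteq> z"
  shows "\<exists>y\<in>S. y \<noteq> z \<and> (\<forall>i\<in>I. f i y = z)"
  using assms
proof (induction I arbitrary: S x rule: finite_induct)
  case empty
  then show ?case by blast
next
  case (insert j I)
  obtain m where "(f j ^^ m) x = z" using insert.prems by blast
  then obtain t where t: "t \<in> S" "t \<noteq> z" "f j t = z"
    using funpow_ex_last_nonzero[of S "f j" x z m] insert.prems by blast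
  define K where "K = {s\<in>S. f j s = z}"
  have "\<exists>y\<in>K. y \<noteq> z \<and> (\<forall>i\<in>I. f i y = z)"
  proof (rule insert.IH)
    show "\<forall>i\<in>I. \<forall>s\<in>K. f i s \<in> K"
    proof (intro ballI)
      fix i s assume i: "i \<in> I" and s: "s \<in> K"
      then have "i \<noteq> j" using insert.hyps(2) by blast
      then show "f i s \<in> K" using insert.prems(1,2) i s unfolding K_def by blast
    qed
    show "\<forall>i\<in>I. \<forall>j\<in>I. i \<noteq> j \<longrightarrow> (\<forall>s\<in>K. f j s = z \<longrightarrow> f j (f i s) = z)"
      using insert.prems(2) unfolding K_def by blast
    show "\<forall>i\<in>I. \<forall>s\<in>K. \<exists>m. (f i ^^ m) s = z"
      using insert.prems(3) unfolding K_def by blast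
  qed (use t K_def in auto)
  then show ?case unfolding K_def by blast
qed

lemma pow_mat_Suc_left:
  fixes A :: "'a::semiring_1 mat"
  assumes "A \<in> carrier_mat n n"
  shows "A ^\<^sub>m Suc m = A * A ^\<^sub>m m"
proof (induction m)
  case 0
  then show ?case using assms by simp
next
  case (Suc m)
  have "A ^\<^sub>m Suc (Suc m) = (A * A ^\<^sub>m m) * A" using Suc by simp
  also have "\<dots> = A * A ^\<^sub>m Suc m" using assms by (simp add: assoc_mult_mat[of _ n n _ n _ n])
  finally show ?case .
qed

lemma transpose_pow_mat:
  fixes A :: "'a::comm_semiring_1 mat"
  assumes "A \<in> carrier_mat n n"
  shows "transpose_mat (A ^\<^sub>m m) = transpose_mat A ^\<^sub>m m"
proof (induction m)
  case 0
  then show ?case using assms by simp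
next
  case (Suc m)
  have "transpose_mat (A ^\<^sub>m Suc m) = transpose_mat (A * A ^\<^sub>m m)"
    using pow_mat_Suc_left[OF assms] by simp
  also have "\<dots> = transpose_mat (A ^\<^sub>m m) * transpose_mat A"
    using assms by (simp add: transpose_mult[of _ n n _ n])
  finally show ?case using Suc by simp
qed

lemma funpow_mult_mat_vec:
  fixes A :: "'a::semiring_1 mat"
  assumes "A \<in> carrier_mat n n" and "x \<in> carrier_vec n"
  shows "((\<lambda>v. A *\<^sub>v v) ^^ m) x = (A ^\<^sub>m m) *\<^sub>v x"
  using assms(2)
proof (induction m arbitrary: x)
  case 0
  then show ?case using assms by simp
next
  case (Suc m)
  have "((\<lambda>v. A *\<^sub>v v) ^^ Suc m) x = (A ^\<^sub>m m) *\<^sub>v (A *\<^sub>v x)"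
    using Suc assms(1) by (simp add: funpow_Suc_right del: funpow.simps)
  also have "\<dots> = (A ^\<^sub>m Suc m) *\<^sub>v x"
    using assms(1) Suc.prems by (simp add: assoc_mult_mat_vec[of _ n n _ n])
  finally show ?case .
qed

lemma anticommuting_kernel_invariant:
  fixes A B :: "'a::comm_ring_1 mat"
  assumes A: "A \<in> carrier_mat n n" and B: "B \<in> carrier_mat n n"
    and anti: "B * A = - (A * B)" and s: "s \<in> carrier_vec n" and Bs: "B *\<^sub>v s = 0\<^sub>v n"
  shows "B *\<^sub>v (A *\<^sub>v s) = 0\<^sub>v n"
proof -
  have "B *\<^sub>v (A *\<^sub>v s) = (- (A * B)) *\<^sub>v s"
    using A B s by (simp flip: anti)
  also have "\<dots> = - (A *\<^sub>v (B *\<^sub>v s))"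
    using A B s by simp
  also have "\<dots> = 0\<^sub>v n"
    using A unfolding Bs by (intro eq_vecI) auto
  finally show ?thesis .
qed

lemma anticommuting_nilpotent_common_kernel:
  fixes A :: "'i \<Rightarrow> 'a::comm_ring_1 mat"
  assumes "finite I"
    and A: "\<And>i. i \<in> I \<Longrightarrow> A i \<in> carrier_mat n n"
    and anti: "\<And>i j. i \<in> I \<Longrightarrow> j \<in> I \<Longrightarrow> i \<noteq> j \<Longrightarrow> A i * A j = - (A j * A i)"
    and nil: "\<And>i. i \<in> I \<Longrightarrow> \<exists>m. A i ^\<^sub>m m = 0\<^sub>m n n"
    and S: "S \<subseteq> carrier_vec n" and inv: "\<And>i v. i \<in> I \<Longrightarrow> v \<in> S \<Longrightarrow> A i *\<^sub>v v \<in> S"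
    and "x \<in> S" and "x \<noteq> 0\<^sub>v n"
  shows "\<exists>z\<in>S. z \<noteq> 0\<^sub>v n \<and> (\<forall>i\<in>I. A i *\<^sub>v z = 0\<^sub>v n)"
proof (rule locally_nilpotent_family_common_zero[where f = "\<lambda>i v. A i *\<^sub>v v"])
  show "\<forall>i\<in>I. \<forall>j\<in>I. i \<noteq> j \<longrightarrow> (\<forall>s\<in>S. A j *\<^sub>v s = 0\<^sub>v n \<longrightarrow> A j *\<^sub>v (A i *\<^sub>v s) = 0\<^sub>v n)"
    using anticommuting_kernel_invariant A anti S by blast
  show "\<forall>i\<in>I. \<forall>s\<in>S. \<exists>m. ((\<lambda>v. A i *\<^sub>v v) ^^ m) s = 0\<^sub>v n"
  proof (intro ballI)
    fix i s assume i: "i \<in> I" and s: "s \<in> S"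
    obtain m where "A i ^\<^sub>m m = 0\<^sub>m n n" using nil[OF i] by blast
    then have "((\<lambda>v. A i *\<^sub>v v) ^^ m) s = 0\<^sub>m n n *\<^sub>v s"
      using funpow_mult_mat_vec[OF A[OF i], of s m] s S by auto
    also have "\<dots> = 0\<^sub>v n" using s S by (intro eq_vecI) auto
    finally show "\<exists>m. ((\<lambda>v. A i *\<^sub>v v) ^^ m) s = 0\<^sub>v n" by blast
  qed
qed (use assms in auto)

lemma anticommuting_nilpotent_common_left_kernel:
  fixes A :: "'i \<Rightarrow> 'a::comm_ring_1 mat"
  assumes "finite I" and "n > 0"
    and A: "\<And>i. i \<in> I \<Longrightarrow> A i \<in> carrier_mat n n"
    and anti: "\<And>i j. i \<in> I \<Longrightarrow> j \<in> I \<Longrightarrow> i \<noteq> j \<Longrightarrow> A i * A j = - (A j * A i)"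
    and nil: "\<And>i. i \<in> I \<Longrightarrow> \<exists>m. A i ^\<^sub>m m = 0\<^sub>m n n"
  shows "\<exists>y\<in>carrier_vec n. y \<noteq> 0\<^sub>v n \<and> (\<forall>i\<in>I. \<forall>v\<in>carrier_vec n. y \<bullet> (A i *\<^sub>v v) = 0)"
proof -
  have "\<exists>y\<in>carrier_vec n. y \<noteq> 0\<^sub>v n \<and> (\<forall>i\<in>I. transpose_mat (A i) *\<^sub>v y = 0\<^sub>v n)"
  proof (rule anticommuting_nilpotent_common_kernel)
    fix i j assume i: "i \<in> I" and j: "j \<in> I" and "i \<noteq> j"
    then have "transpose_mat (A j * A i) = - transpose_mat (A i * A j)"
      using anti[OF i j] by (simp add: transpose_uminus)
    then show "transpose_mat (A i) * transpose_mat (A j)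
        = - (transpose_mat (A j) * transpose_mat (A i))"
      using A[OF i] A[OF j] by (simp add: transpose_mult)
  next
    fix i assume i: "i \<in> I"
    obtain m where "A i ^\<^sub>m m = 0\<^sub>m n n" using nil[OF i] by blast
    then show "\<exists>m. transpose_mat (A i) ^\<^sub>m m = 0\<^sub>m n n"
      using transpose_pow_mat[OF A[OF i], of m] by auto
  next
    show "unit_vec n 0 \<noteq> 0\<^sub>v n"
      using \<open>n > 0\<close> by (metis index_unit_vec(1) index_zero_vec(1) zero_neq_one)
  next
    fix i and v :: "'a vec" assume "i \<in> I" and "v \<in> carrier_vec n"
    then show "transpose_mat (A i) *\<^sub>v v \<in> carrier_vec n"
      using A by (meson mult_mat_vec_carrier transpose_carrier_mat)
  qed (use assms in auto)
  then show ?thesis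
    using transpose_vec_mult_scalar A
    by (metis mult_mat_vec_carrier transpose_carrier_mat scalar_prod_left_zero)
qed

lemma ex_nonzero_index_vec:
  assumes "x \<in> carrier_vec n" and "x \<noteq> 0\<^sub>v n"
  shows "\<exists>a<n. x $ a \<noteq> 0"
proof (rule ccontr)
  assume "\<not> ?thesis"
  then have "x = 0\<^sub>v n" using assms(1) by (intro eq_vecI) auto
  then show False using assms(2) by simp
qed

lemma ex_nonzero_row_mat:
  assumes "B \<in> carrier_mat r n" and "B \<noteq> 0\<^sub>m r n"
  shows "\<exists>a<r. row B a \<noteq> 0\<^sub>v n"
proof (rule ccontr)
  assume zero_rows: "\<not> ?thesis"
  have "B = 0\<^sub>m r n"
  proof (intro eq_matI)
    fix a b assume ab: "a < dim_row (0\<^sub>m r n :: 'a mat)" "b < dim_col (0\<^sub>m r n :: 'a mat)"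
    then have "B $$ (a, b) = row B a $ b" using assms(1) by auto
    then show "B $$ (a, b) = 0\<^sub>m r n $$ (a, b)" using zero_rows ab by auto
  qed (use assms(1) in auto)
  then show False using assms(2) by simp
qed

lemma ex_other_nonzero_index_vec:
  fixes y z :: "'a::idom vec"
  assumes "y \<in> carrier_vec n" and "z \<in> carrier_vec n" and "y \<noteq> 0\<^sub>v n" and "y \<bullet> z = 0"
    and "p < n" and "z $ p \<noteq> 0"
  shows "\<exists>q<n. q \<noteq> p \<and> y $ q \<noteq> 0"
proof (rule ccontr)
  assume only_p: "\<not> ?thesis"
  have "y \<bullet> z = (\<Sum>l\<in>{0..<n}. y $ l * z $ l)" using assms(2) by (simp add: scalar_prod_def)
  also have "\<dots> = y $ p * z $ p + (\<Sum>l\<in>{0..<n} - {p}. y $ l * z $ l)"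
    using assms(5) by (simp add: sum.remove)
  also have "(\<Sum>l\<in>{0..<n} - {p}. y $ l * z $ l) = 0" using only_p by (intro sum.neutral) auto
  finally have "y $ p = 0" using assms(4,6) by simp
  then have "y = 0\<^sub>v n" using only_p assms(1) by (intro eq_vecI) auto
  then show False using assms(3) by simp
qed

lemma ex_nonzero_orthogonal_vec:
  fixes y :: "'a::comm_ring_1 vec"
  assumes "y \<in> carrier_vec n" and "n \<ge> 2"
  shows "\<exists>x\<in>carrier_vec n. x \<noteq> 0\<^sub>v n \<and> y \<bullet> x = 0"
proof (cases "y $ 0 = 0")
  case True
  then show ?thesis using assms
    by (intro bexI[of _ "unit_vec n 0"]) (auto simp: vec_eq_iff)
next
  case False
  let ?x = "y $ 1 \<cdot>\<^sub>v unit_vec n 0 - y $ 0 \<cdot>\<^sub>v unit_vec n 1"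
  have "?x \<noteq> 0\<^sub>v n"
  proof
    assume "?x = 0\<^sub>v n"
    then have "?x $ 1 = 0" using assms(2) by simp
    then show False using False assms(2) by simp
  qed
  moreover have "y \<bullet> ?x = 0"
    using assms by (simp add: scalar_prod_minus_distrib[of _ n] mult.commute)
  ultimately show ?thesis by (intro bexI[of _ ?x]) auto
qed

lemma ex_vec_scalar_prod_nonzero:
  fixes c :: "'i \<Rightarrow> 'a::field_char_0 vec"
  assumes "finite I" and "\<And>i. i \<in> I \<Longrightarrow> c i \<in> carrier_vec n" and "\<And>i. i \<in> I \<Longrightarrow> c i \<noteq> 0\<^sub>v n"
  shows "\<exists>u\<in>carrier_vec n. \<forall>i\<in>I. c i \<bullet> u \<noteq> 0"
  using assms
proof (induction I rule: finite_induct)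
  case empty
  show ?case by (rule bexI[of _ "0\<^sub>v n"]) auto
next
  case (insert j I)
  then obtain w where w: "w \<in> carrier_vec n" "\<forall>i\<in>I. c i \<bullet> w \<noteq> 0" by auto
  obtain a where a: "a < n" "c j $ a \<noteq> 0"
    using ex_nonzero_index_vec[of "c j" n] insert.prems by auto
  have shift: "c i \<bullet> (w + t \<cdot>\<^sub>v unit_vec n a) = c i \<bullet> w + t * c i $ a"
    if "i \<in> insert j I" for i t
  proof -
    have ci: "c i \<in> carrier_vec n" using that insert.prems(1) by blast
    have "c i \<bullet> (w + t \<cdot>\<^sub>v unit_vec n a) = c i \<bullet> w + c i \<bullet> (t \<cdot>\<^sub>v unit_vec n a)"
      using ci w(1) by (intro scalar_prod_add_distrib) auto
    also have "c i \<bullet> (t \<cdot>\<^sub>v unit_vec n a) = t * c i $ a"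
      using ci a(1) by simp
    finally show ?thesis .
  qed
  define roots where "roots = (\<lambda>i. - (c i \<bullet> w) / c i $ a) ` insert j I"
  have "finite roots" unfolding roots_def using insert.hyps(1) by simp
  then obtain t where t: "t \<notin> roots"
    using ex_new_if_finite[OF infinite_UNIV_char_0] by blast
  have "c i \<bullet> (w + t \<cdot>\<^sub>v unit_vec n a) \<noteq> 0" if i: "i \<in> insert j I" for i
  proof
    assume "c i \<bullet> (w + t \<cdot>\<^sub>v unit_vec n a) = 0"
    then have root: "c i \<bullet> w + t * c i $ a = 0" using shift[OF i] by simp
    show False
    proof (cases "c i $ a = 0")
      case True
      then show False using root i a(2) w(2) by auto
    next
      case False
      have "t * c i $ a = - (c i \<bullet> w)" using root by (metis add.commute eq_neg_iff_add_eq_0)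
      then have "t = - (c i \<bullet> w) / c i $ a" using False by (metis nonzero_mult_div_cancel_right)
      then show False using t i unfolding roots_def by blast
    qed
  qed
  then show ?case using w(1) by (intro bexI[of _ "w + t \<cdot>\<^sub>v unit_vec n a"]) auto
qed

lemma ex_vecs_bilinear_nonzero:
  fixes B :: "'i \<Rightarrow> 'a::field_char_0 mat"
  assumes "finite I" and B: "\<And>i. i \<in> I \<Longrightarrow> B i \<in> carrier_mat n n"
    and "\<And>i. i \<in> I \<Longrightarrow> B i \<noteq> 0\<^sub>m n n"
  shows "\<exists>u\<in>carrier_vec n. \<exists>w\<in>carrier_vec n. \<forall>i\<in>I. u \<bullet> (B i *\<^sub>v w) \<noteq> 0"
proof -
  have "\<forall>i\<in>I. \<exists>a. a < n \<and> row (B i) a \<noteq> 0\<^sub>v n"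
    using ex_nonzero_row_mat[OF B assms(3)] by blast
  then obtain r where r: "\<And>i. i \<in> I \<Longrightarrow> r i < n \<and> row (B i) (r i) \<noteq> 0\<^sub>v n"
    using bchoice by metis
  have rows: "row (B i) (r i) \<in> carrier_vec n" if "i \<in> I" for i
    using B[OF that] row_carrier[of "B i" "r i"] by auto
  obtain w where w: "w \<in> carrier_vec n" "\<forall>i\<in>I. row (B i) (r i) \<bullet> w \<noteq> 0"
    using ex_vec_scalar_prod_nonzero[of I "\<lambda>i. row (B i) (r i)" n] assms(1) rows r by blast
  have "B i *\<^sub>v w \<noteq> 0\<^sub>v n" if "i \<in> I" for i
  proof
    assume "B i *\<^sub>v w = 0\<^sub>v n"
    then have "(B i *\<^sub>v w) $ r i = 0" using r[OF that] by simp
    then show False using w that r[OF that] B[OF that] by auto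
  qed
  moreover have "B i *\<^sub>v w \<in> carrier_vec n" if "i \<in> I" for i using B[OF that] w(1) by simp
  ultimately obtain u where u: "u \<in> carrier_vec n" "\<forall>i\<in>I. (B i *\<^sub>v w) \<bullet> u \<noteq> 0"
    using ex_vec_scalar_prod_nonzero[of I "\<lambda>i. B i *\<^sub>v w" n] assms(1) by blast
  have "u \<bullet> (B i *\<^sub>v w) \<noteq> 0" if "i \<in> I" for i
    using u that comm_scalar_prod[OF u(1) mult_mat_vec_carrier[OF B[OF that] w(1)]] by simp
  then show ?thesis using u(1) w(1) by blast
qed

lemma scalar_prod_eliminate_two_coords:
  fixes a b y :: "'a::field vec"
  assumes a: "a \<in> carrier_vec n" and "y \<bullet> a = 0" and "a $ p = 0" and "y $ q \<noteq> 0"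
    and "p \<noteq> q" and "p < n" and "q < n"
  shows "b \<bullet> a = (\<Sum>l\<in>{0..<n} - {p, q}. (b $ l - b $ q * y $ l / y $ q) * a $ l)"
proof -
  let ?L = "{0..<n} - {p, q}"
  have split: "sum f {0..<n} = f p + f q + sum f ?L" for f :: "nat \<Rightarrow> 'a"
  proof -
    have "sum f {0..<n} = f p + sum f ({0..<n} - {p})" using assms(6) by (simp add: sum.remove)
    also have "sum f ({0..<n} - {p}) = f q + sum f ({0..<n} - {p} - {q})"
      using assms(5,7) by (simp add: sum.remove)
    also have "{0..<n} - {p} - {q} = ?L" by auto
    finally show ?thesis by simp
  qed
  have "0 = y $ q * a $ q + (\<Sum>l\<in>?L. y $ l * a $ l)"
    using assms(2,3) a split[of "\<lambda>l. y $ l * a $ l"] by (simp add: scalar_prod_def)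
  then have aq: "a $ q = - (\<Sum>l\<in>?L. y $ l * a $ l) / y $ q"
    using assms(4) by (simp add: field_simps eq_neg_iff_add_eq_0)
  have "b \<bullet> a = b $ q * a $ q + (\<Sum>l\<in>?L. b $ l * a $ l)"
    using assms(3) a split[of "\<lambda>l. b $ l * a $ l"] by (simp add: scalar_prod_def)
  also have "\<dots> = (\<Sum>l\<in>?L. b $ l * a $ l) - b $ q / y $ q * (\<Sum>l\<in>?L. y $ l * a $ l)"
    unfolding aq by (simp add: field_simps)
  also have "\<dots> = (\<Sum>l\<in>?L. (b $ l - b $ q * y $ l / y $ q) * a $ l)"
    by (simp add: sum_distrib_left sum_subtractf[symmetric] algebra_simps)
  finally show ?thesis .
qed

text \<open>Replacing \<open>a\<close> by its projection along \<open>z\<close> that kills the \<open>p\<close>-th coordinate changes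
  neither \<open>b \<bullet> a\<close> nor \<open>y \<bullet> a\<close>.\<close>

lemma scalar_prod_factor_two_codim:
  fixes a b y z :: "'a::field vec"
  assumes a: "a \<in> carrier_vec n" and b: "b \<in> carrier_vec n"
    and y: "y \<in> carrier_vec n" and z: "z \<in> carrier_vec n"
    and "y \<bullet> z = 0" and "y \<bullet> a = 0" and "b \<bullet> z = 0"
    and "z $ p \<noteq> 0" and "y $ q \<noteq> 0" and "p \<noteq> q" and "p < n" and "q < n"
  shows "b \<bullet> a = (\<Sum>l\<in>{0..<n} - {p, q}.
    (b $ l - b $ q * y $ l / y $ q) * (a $ l - a $ p / z $ p * z $ l))"
proof -
  define a' where "a' = a - (a $ p / z $ p) \<cdot>\<^sub>v z"
  have a': "a' \<in> carrier_vec n" using a z unfolding a'_def by simp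
  have dot_a': "v \<bullet> a' = v \<bullet> a - (a $ p / z $ p) * (v \<bullet> z)" if "v \<in> carrier_vec n" for v
    using that a z unfolding a'_def by (simp add: scalar_prod_minus_distrib[of _ n])
  have "b \<bullet> a = b \<bullet> a'" using dot_a'[OF b] assms(7) by simp
  also have "\<dots> = (\<Sum>l\<in>{0..<n} - {p, q}. (b $ l - b $ q * y $ l / y $ q) * a' $ l)"
  proof (rule scalar_prod_eliminate_two_coords[OF a' _ _ assms(9-12)])
    show "y \<bullet> a' = 0" using dot_a'[OF y] assms(5,6) by simp
    show "a' $ p = 0" using a z assms(8,11) unfolding a'_def by simp
  qed
  also have "\<dots> = (\<Sum>l\<in>{0..<n} - {p, q}.
      (b $ l - b $ q * y $ l / y $ q) * (a $ l - a $ p / z $ p * z $ l))"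
    using a z unfolding a'_def by (intro sum.cong) auto
  finally show ?thesis .
qed

lemma card_le_of_diagonal_factorization:
  fixes F :: "'i \<Rightarrow> 'l \<Rightarrow> 'a::field" and G :: "'l \<Rightarrow> 'i \<Rightarrow> 'a"
  assumes "finite I" and "finite L"
    and FG: "\<And>i j. i \<in> I \<Longrightarrow> j \<in> I \<Longrightarrow> (\<Sum>l\<in>L. F i l * G l j) = (if i = j then c i else 0)"
    and c: "\<And>i. i \<in> I \<Longrightarrow> c i \<noteq> 0"
  shows "card I \<le> card L"
proof (rule ccontr)
  define k d where "k = card I" and "d = card L"
  assume "\<not> card I \<le> card L"
  then have "d < k" unfolding k_def d_def by simp
  obtain gI where gI: "bij_betw gI {0..<k} I" using ex_bij_betw_nat_finite[OF assms(1)] k_def by blast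
  obtain gL where gL: "bij_betw gL {0..<d} L" using ex_bij_betw_nat_finite[OF assms(2)] d_def by blast
  define P where "P = mat k k (\<lambda>(i, l). if l < d then F (gI i) (gL l) else 0)"
  define Q where "Q = mat k k (\<lambda>(l, j). if l < d then G (gL l) (gI j) / c (gI j) else 0)"
  have P: "P \<in> carrier_mat k k" and Q: "Q \<in> carrier_mat k k" unfolding P_def Q_def by auto
  have "P * Q = 1\<^sub>m k"
  proof (rule eq_matI)
    fix i j assume "i < dim_row (1\<^sub>m k)" and "j < dim_col (1\<^sub>m k)"
    then have i: "i < k" and j: "j < k" by auto
    then have I: "gI i \<in> I" "gI j \<in> I" using gI by (auto simp: bij_betw_def)
    have "(P * Q) $$ (i, j) = (\<Sum>l\<in>{0..<k}. P $$ (i, l) * Q $$ (l, j))"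
      using i j P Q by (simp add: scalar_prod_def)
    also have "\<dots> = (\<Sum>l\<in>{0..<k}. if l < d then F (gI i) (gL l) * G (gL l) (gI j) / c (gI j) else 0)"
      by (rule sum.cong) (auto simp: P_def Q_def i j)
    also have "\<dots> = (\<Sum>l\<in>{0..<d}. F (gI i) (gL l) * G (gL l) (gI j)) / c (gI j)"
      using \<open>d < k\<close>
      by (simp add: sum.If_cases sum_divide_distrib Int_absorb1 subset_eq
          lessThan_def[symmetric] atLeast0LessThan)
    also have "\<dots> = (\<Sum>l\<in>L. F (gI i) l * G l (gI j)) / c (gI j)"
      using sum.reindex_bij_betw[OF gL, of "\<lambda>l. F (gI i) l * G l (gI j)"] by simp
    also have "\<dots> = 1\<^sub>m k $$ (i, j)"
      using FG[OF I] c[OF I(2)] i j gI by (auto simp: bij_betw_def inj_on_def)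
    finally show "(P * Q) $$ (i, j) = 1\<^sub>m k $$ (i, j)" .
  qed (auto simp: P_def Q_def)
  then have "Q * P = 1\<^sub>m k" using mat_mult_left_right_inverse[OF P Q] by blast
  moreover have "(Q * P) $$ (k - 1, k - 1) = 0"
    using \<open>d < k\<close> P Q by (auto simp: scalar_prod_def Q_def intro!: sum.neutral)
  ultimately show False using \<open>d < k\<close> by simp
qed

text \<open>The symmetrisation of the matrix \<open>\<Sum>l\<in>L. X i l * Y l j\<close> is diagonal with nonzero
  entries, and it factors through \<open>L <+> L\<close>.\<close>

lemma card_le_of_skew_factorization:
  fixes X :: "'i \<Rightarrow> 'l \<Rightarrow> 'a::field_char_0" and Y :: "'l \<Rightarrow> 'i \<Rightarrow> 'a"
  assumes "finite I" and "finite L"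
    and skew: "\<And>i j. i \<in> I \<Longrightarrow> j \<in> I \<Longrightarrow> i \<noteq> j \<Longrightarrow>
      (\<Sum>l\<in>L. X i l * Y l j) + (\<Sum>l\<in>L. X j l * Y l i) = 0"
    and diag: "\<And>i. i \<in> I \<Longrightarrow> (\<Sum>l\<in>L. X i l * Y l i) \<noteq> 0"
  shows "card I \<le> 2 * card L"
proof -
  define F where "F i = case_sum (\<lambda>l. X i l) (\<lambda>l. Y l i)" for i
  define G where "G s j = case_sum (\<lambda>l. Y l j) (\<lambda>l. X j l) s" for s j
  have "card I \<le> card (L <+> L)"
  proof (rule card_le_of_diagonal_factorization[where c = "\<lambda>i. 2 * (\<Sum>l\<in>L. X i l * Y l i)"])
    fix i j assume "i \<in> I" and "j \<in> I"
    then show "(\<Sum>s\<in>L <+> L. F i s * G s j) = (if i = j then 2 * (\<Sum>l\<in>L. X i l * Y l i) else 0)"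
      using skew[of i j] \<open>finite L\<close> by (simp add: sum.Plus F_def G_def mult.commute)
  qed (use assms in auto)
  then show ?thesis using \<open>finite L\<close> by (simp add: card_Plus)
qed

text \<open>Here \<open>e\<^sub>j w\<close> ranges over \<open>y\<^sup>\<bottom>\<close> and \<open>e\<^sub>i\<^sup>T u\<close> over \<open>z\<^sup>\<bottom>\<close>, so \<open>u \<bullet> e\<^sub>i e\<^sub>j w\<close> is a
  pairing of \<open>n - 2\<close> coordinates.\<close>

lemma anticommuting_family_card_le:
  fixes e :: "'i \<Rightarrow> 'a::field_char_0 mat"
  assumes "finite I"
    and e: "\<And>i. i \<in> I \<Longrightarrow> e i \<in> carrier_mat n n"
    and anti: "\<And>i j. i \<in> I \<Longrightarrow> j \<in> I \<Longrightarrow> i \<noteq> j \<Longrightarrow> e i * e j = - (e j * e i)"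
    and u: "u \<in> carrier_vec n" and w: "w \<in> carrier_vec n"
    and uw: "\<And>i. i \<in> I \<Longrightarrow> u \<bullet> ((e i * e i) *\<^sub>v w) \<noteq> 0"
    and y: "y \<in> carrier_vec n" "y \<noteq> 0\<^sub>v n"
    and ye: "\<And>i v. i \<in> I \<Longrightarrow> v \<in> carrier_vec n \<Longrightarrow> y \<bullet> (e i *\<^sub>v v) = 0"
    and z: "z \<in> carrier_vec n" "z \<noteq> 0\<^sub>v n" "y \<bullet> z = 0"
    and ez: "\<And>i. i \<in> I \<Longrightarrow> e i *\<^sub>v z = 0\<^sub>v n"
  shows "card I \<le> 2 * (n - 2)"
proof -
  obtain p where p: "p < n" "z $ p \<noteq> 0" using ex_nonzero_index_vec z(1,2) by blast
  obtain q where q: "q < n" "q \<noteq> p" "y $ q \<noteq> 0"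
    using ex_other_nonzero_index_vec[OF y(1) z(1) y(2) z(3) p] by blast
  define M where "M i j = u \<bullet> (e i *\<^sub>v (e j *\<^sub>v w))" for i j
  define \<beta> where "\<beta> i = transpose_mat (e i) *\<^sub>v u" for i
  define X where "X i l = \<beta> i $ l - \<beta> i $ q * y $ l / y $ q" for i l
  define Y where "Y l j = (e j *\<^sub>v w) $ l - (e j *\<^sub>v w) $ p / z $ p * z $ l" for l j
  have factor: "M i j = (\<Sum>l\<in>{0..<n} - {p, q}. X i l * Y l j)"
    if i: "i \<in> I" and j: "j \<in> I" for i j
  proof -
    have ejw: "e j *\<^sub>v w \<in> carrier_vec n" using e[OF j] w by simp
    have \<beta>: "\<beta> i \<in> carrier_vec n" using e[OF i] u unfolding \<beta>_def by simp
    have "M i j = \<beta> i \<bullet> (e j *\<^sub>v w)"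
      unfolding M_def \<beta>_def using transpose_vec_mult_scalar[OF e[OF i] ejw u] by simp
    moreover have "\<beta> i \<bullet> z = 0"
      unfolding \<beta>_def using transpose_vec_mult_scalar[OF e[OF i] z(1) u] ez[OF i] u by simp
    ultimately show ?thesis unfolding X_def Y_def
      using scalar_prod_factor_two_codim[OF ejw \<beta> y(1) z(1) z(3) ye[OF j w] _ p(2) q(3)
          q(2)[symmetric] p(1) q(1)]
      by simp
  qed
  have skew: "M i j + M j i = 0" if i: "i \<in> I" and j: "j \<in> I" and "i \<noteq> j" for i j
  proof -
    have "e i *\<^sub>v (e j *\<^sub>v w) = (- (e j * e i)) *\<^sub>v w"
      using e[OF i] e[OF j] w by (simp flip: anti[OF i j \<open>i \<noteq> j\<close>])
    also have "\<dots> = - (e j *\<^sub>v (e i *\<^sub>v w))" using e[OF i] e[OF j] w by simp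
    finally show ?thesis unfolding M_def using u e[OF i] e[OF j] w by simp
  qed
  have diag: "M i i \<noteq> 0" if "i \<in> I" for i
    using uw[OF that] e[OF that] w unfolding M_def by simp
  have "card I \<le> 2 * card ({0..<n} - {p, q})"
    by (rule card_le_of_skew_factorization[where X = X and Y = Y])
      (use \<open>finite I\<close> skew diag in \<open>simp_all flip: factor\<close>)
  then show ?thesis using p(1) q(1,2) by (simp add: card_Diff_subset)
qed

theorem claim1:
  fixes n k :: nat and e :: "nat \<Rightarrow> complex mat"
  assumes "n \<ge> 2"
    and "\<And>i. i \<in> {1..k} \<Longrightarrow> e i \<in> carrier_mat n n"
    and "anticommuting k e"
    and "\<And>i. i \<in> {1..k} \<Longrightarrow> nilpotent_mat (e i)"
    and "\<And>i. i \<in> {1..k} \<Longrightarrow> e i * e i \<noteq> 0\<^sub>m n n"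
  shows "k \<le> 2 * (n - 2)"
proof -
  let ?I = "{1..k}"
  note e = assms(2)
  have anti: "\<And>i j. i \<in> ?I \<Longrightarrow> j \<in> ?I \<Longrightarrow> i \<noteq> j \<Longrightarrow> e i * e j = - (e j * e i)"
    using assms(3) unfolding anticommuting_def by blast
  have nil: "\<exists>m. e i ^\<^sub>m m = 0\<^sub>m n n" if "i \<in> ?I" for i
    using assms(4)[OF that] e[OF that] unfolding nilpotent_mat_def by auto
  have "n > 0" using assms(1) by simp
  obtain y where y: "y \<in> carrier_vec n" "y \<noteq> 0\<^sub>v n"
    and ye: "\<forall>i\<in>?I. \<forall>v\<in>carrier_vec n. y \<bullet> (e i *\<^sub>v v) = 0"
    using anticommuting_nilpotent_common_left_kernel[where I = ?I and n = n and A = e,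
        OF _ \<open>n > 0\<close> e anti nil]
    by blast
  define Y where "Y = {v \<in> carrier_vec n. y \<bullet> v = 0}"
  obtain x where x: "x \<in> Y" "x \<noteq> 0\<^sub>v n"
    using ex_nonzero_orthogonal_vec[OF y(1) assms(1)] unfolding Y_def by blast
  have "e i *\<^sub>v v \<in> Y" if "i \<in> ?I" and "v \<in> Y" for i v
    using that e[OF that(1)] ye unfolding Y_def by simp
  then obtain z where z: "z \<in> carrier_vec n" "z \<noteq> 0\<^sub>v n" "y \<bullet> z = 0"
    and ez: "\<forall>i\<in>?I. e i *\<^sub>v z = 0\<^sub>v n"
    using anticommuting_nilpotent_common_kernel[where I = ?I and n = n and A = e and S = Y,
        OF _ e anti nil _ _ x]
    unfolding Y_def by auto
  have "e i * e i \<in> carrier_mat n n" if "i \<in> ?I" for i using e[OF that] by simp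
  then obtain u w where "u \<in> carrier_vec n" "w \<in> carrier_vec n"
    and "\<forall>i\<in>?I. u \<bullet> ((e i * e i) *\<^sub>v w) \<noteq> 0"
    using ex_vecs_bilinear_nonzero[where I = ?I and B = "\<lambda>i. e i * e i" and n = n,
        OF _ _ assms(5)]
    by blast
  then have "card ?I \<le> 2 * (n - 2)"
    using anticommuting_family_card_le[where I = ?I and e = e and y = y and z = z, OF _ e anti]
      y ye z ez
    by blast
  then show ?thesis by simp
qed

end
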